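(* Let $T_\varepsilon$ be the last time $t$ at which $\max_kx_k(t)-\min_kx_k(t)>\varepsilon$, for $0<\varepsilon<1$. Then $$\mathbb{E}\,T_\varepsilon=O\!\left(\frac{d^2n^4}{p^3\rho^2}\right)\log\frac{n}{\rho\varepsilon}.$$ In particular, in expected time of this order all robots lie within distance $\varepsilon$ of the plane $X=0$ from then on.
   Context: Distributed motion coordination model. Let $G$ be a connected undirected graph on $[n]$ (the robots) without self-loops, and let $R\subseteq[n]$ with $|R|=r$ be the set of robots pinned to the plane $X=0$. Symmetrization: form $G^*$ on $\nu=2n-r$ vertices by adding a mirror copy $i'$ of every $i\notin R$ (with $i'=i$ for $i\in R$). The edges of $G^*$ are the edges of $G$ together with their mirror images $\{i',j'\}$. Weights and parameters: - Assign each vertex $i$ of $G^*$ a weight $a_i$ with $0<a_i<1/(d_i+1)$, where $d_i$ is its degree in $G^*$, and mirror copies receive equal weights. - $d$ is the maximum degree of $G^*$, $\rho=\min_ia_i$, and $p\in(0,1]$. At each time $t$, independently over time, $G_t^*$ is obtained by keeping each edge of $G$ independently with probability $p$ (deleting it with probability $1-p$), together with its mirror image. The matrix $P_t$ is defined by: - $(P_t)_{ij}=a_i$ and $(P_t)_{ji}=a_j$ for each edge $\{i,j\}$ of $G_t^*$; - $(P_t)_{ii}=1-\sum_{j\ne i}(P_t)_{ij}$; - all other entries are $0$. Only the $X$-coordinates matter. Take $x(0)\in\mathbb{R}^\nu$ with $x_i(0)\in[0,1]$ for $i\in[n]$, $x_i(0)=0$ for $i\in R$, and $x_{i'}(0)=-x_i(0)$.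 The dynamics is $x(t+1)=P_tx(t)$. *)

theory Defs
  imports "HOL-Probability.Probability"
begin

text \<open>Vertices of the symmetrized graph G*: (i, False) is robot i, (i, True) is its
  mirror copy i' (only present for i not in R; for i in R, i' = i).\<close>

type_synonym vtx = "nat \<times> bool"

definition mir :: "nat set \<Rightarrow> vtx \<Rightarrow> vtx" where
  "mir R u = (if fst u \<in> R then (fst u, False) else (fst u, \<not> snd u))"

definition sym_vertices :: "nat \<Rightarrow> nat set \<Rightarrow> vtx set" where
  "sym_vertices n R = {(i, False) | i. i < n} \<union> {(i, True) | i. i < n \<and> i \<notin> R}"

definition sym_edges_of :: "nat set \<Rightarrow> nat set \<Rightarrow> vtx set set" where
  "sym_edges_of R e = {(\<lambda>i. (i, False)) ` e, (\<lambda>i. mir R (i, False)) ` e}"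

definition sym_edges :: "nat set \<Rightarrow> nat set set \<Rightarrow> vtx set set" where
  "sym_edges R F = (\<Union>e\<in>F. sym_edges_of R e)"

definition sym_degree :: "nat \<Rightarrow> nat set \<Rightarrow> nat set set \<Rightarrow> vtx \<Rightarrow> nat" where
  "sym_degree n R E u = card {v \<in> sym_vertices n R. v \<noteq> u \<and> {u, v} \<in> sym_edges R E}"

definition simple_graph_on :: "nat \<Rightarrow> nat set set \<Rightarrow> bool" where
  "simple_graph_on n E = (\<forall>e\<in>E. \<exists>i j. i < n \<and> j < n \<and> i \<noteq> j \<and> e = {i, j})"

definition graph_connected :: "nat \<Rightarrow> nat set set \<Rightarrow> bool" where
  "graph_connected n E = (\<forall>i<n. \<forall>j<n. (i, j) \<in> {(k, l). {k, l} \<in> E}\<^sup>*)"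

definition edge_sampling :: "real \<Rightarrow> nat set set \<Rightarrow> (nat \<times> nat set \<Rightarrow> bool) measure" where
  "edge_sampling p E = Pi\<^sub>M (UNIV \<times> E) (\<lambda>_. measure_pmf (bernoulli_pmf p))"

definition kept_edges :: "nat set set \<Rightarrow> (nat \<times> nat set \<Rightarrow> bool) \<Rightarrow> nat \<Rightarrow> nat set set" where
  "kept_edges E \<omega> t = {e \<in> E. \<omega> (t, e)}"

definition motion_matrix ::
  "nat \<Rightarrow> nat set \<Rightarrow> nat set set \<Rightarrow> (vtx \<Rightarrow> real) \<Rightarrow> (nat \<times> nat set \<Rightarrow> bool) \<Rightarrow> nat \<Rightarrow> vtx \<Rightarrow> vtx \<Rightarrow> real" where
  "motion_matrix n R E a \<omega> t u v =
     (if u = v then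
        1 - (\<Sum>w\<in>sym_vertices n R - {u}.
               (if {u, w} \<in> sym_edges R (kept_edges E \<omega> t) then a u else 0))
      else if {u, v} \<in> sym_edges R (kept_edges E \<omega> t) then a u else 0)"

primrec motion_traj ::
  "nat \<Rightarrow> nat set \<Rightarrow> nat set set \<Rightarrow> (vtx \<Rightarrow> real) \<Rightarrow> (vtx \<Rightarrow> real) \<Rightarrow> (nat \<times> nat set \<Rightarrow> bool) \<Rightarrow> nat \<Rightarrow> vtx \<Rightarrow> real" where
  "motion_traj n R E a x0 \<omega> 0 = x0"
| "motion_traj n R E a x0 \<omega> (Suc t) =
     (\<lambda>u. \<Sum>v\<in>sym_vertices n R. motion_matrix n R E a \<omega> t u v * motion_traj n R E a x0 \<omega> t v)"

definition spread :: "vtx set \<Rightarrow> (vtx \<Rightarrow> real) \<Rightarrow> real" where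
  "spread V x = Max (x ` V) - Min (x ` V)"

text \<open>T_eps: the last time t with spread > eps (0 if there is none, \<infinity> if unbounded).\<close>
definition last_time ::
  "nat \<Rightarrow> nat set \<Rightarrow> nat set set \<Rightarrow> (vtx \<Rightarrow> real) \<Rightarrow> (vtx \<Rightarrow> real) \<Rightarrow> real \<Rightarrow> (nat \<times> nat set \<Rightarrow> bool) \<Rightarrow> ennreal" where
  "last_time n R E a x0 eps \<omega> =
     (SUP t\<in>{t. spread (sym_vertices n R) (motion_traj n R E a x0 \<omega> t) > eps}. of_nat t)"

end

theory Submission
  imports Defs
begin

text \<open>
  Mirror-antisymmetric positions stay antisymmetric, so the pinned robots stay at 0 and the
  weighted energy \<open>V x = \<Sum>u. x u\<^sup>2 / a u\<close> measures the distance to the plane \<open>X = 0\<close>.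
  One step lowers \<open>V\<close> by at least \<open>\<rho>\<close> times the Dirichlet form of the edges kept at that
  time. Averaged over that step's coins this is \<open>p\<close> times the Dirichlet form of \<open>G*\<close>, which
  by a path (Poincare) inequality towards a pinned robot is at least \<open>\<rho> V / (2 n\<^sup>3)\<close>.
  Hence \<open>E V\<^sub>t \<le> (1 - \<gamma>)\<^sup>t V\<^sub>0\<close> with \<open>\<gamma> = p \<rho>\<^sup>2 / (2 n\<^sup>3)\<close>. A spread above \<open>\<epsilon>\<close> forces
  \<open>V > \<epsilon>\<^sup>2 / 4\<close>, and \<open>V\<close> never increases, so \<open>T\<^sub>\<epsilon>\<close> is at most the number of times with
  \<open>V > \<epsilon>\<^sup>2 / 4\<close>; by Markov's inequality its expectation is \<open>O(\<gamma>\<^sup>-\<^sup>1 log (n / (\<rho> \<epsilon>)))\<close>.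
  This is smaller than the claimed bound by a factor \<open>d\<^sup>2 n / p\<^sup>2\<close>.
\<close>

lemma symmetric_sum_by_parts:
  fixes A :: "'v \<Rightarrow> 'v \<Rightarrow> bool" and x :: "'v \<Rightarrow> real"
  assumes sym: "\<And>u w. A u w = A w u"
  shows "2 * (\<Sum>u\<in>V. x u * (\<Sum>w\<in>V. if A u w then x u - x w else 0))
    = (\<Sum>u\<in>V. \<Sum>w\<in>V. if A u w then (x u - x w)\<^sup>2 else 0)"
proof -
  have "(\<Sum>u\<in>V. x u * (\<Sum>w\<in>V. if A u w then x u - x w else 0))
      = (\<Sum>u\<in>V. \<Sum>w\<in>V. if A u w then (x u - x w) * x u else 0)"
    unfolding sum_distrib_left by (intro sum.cong refl) (auto simp: algebra_simps)
  moreover have "\<dots> = (\<Sum>u\<in>V. \<Sum>w\<in>V. if A u w then (x w - x u) * x w else 0)"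
    by (subst sum.swap) (intro sum.cong refl, auto simp: sym)
  ultimately have "2 * (\<Sum>u\<in>V. x u * (\<Sum>w\<in>V. if A u w then x u - x w else 0))
      = (\<Sum>u\<in>V. \<Sum>w\<in>V. (if A u w then (x u - x w) * x u else 0) + (if A u w then (x w - x u) * x w else 0))"
    by (simp add: sum.distrib)
  also have "\<dots> = (\<Sum>u\<in>V. \<Sum>w\<in>V. if A u w then (x u - x w)\<^sup>2 else 0)"
    by (intro sum.cong refl) (auto simp: power2_eq_square algebra_simps)
  finally show ?thesis .
qed

lemma laplacian_step_weighted_energy:
  fixes A :: "'v \<Rightarrow> 'v \<Rightarrow> bool" and a x :: "'v \<Rightarrow> real"
  assumes fin: "finite V" and sym: "\<And>u w. A u w = A w u"
    and a_pos: "\<And>u. u \<in> V \<Longrightarrow> 0 < a u"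
    and a_deg: "\<And>u. u \<in> V \<Longrightarrow> a u * (real (card {w\<in>V. A u w}) + 1) \<le> 1"
    and rho_le: "\<And>u. u \<in> V \<Longrightarrow> rho \<le> a u"
  shows "(\<Sum>u\<in>V. (x u - a u * (\<Sum>w\<in>V. if A u w then x u - x w else 0))\<^sup>2 / a u)
         + rho * (\<Sum>u\<in>V. \<Sum>w\<in>V. if A u w then (x u - x w)\<^sup>2 else 0)
         \<le> (\<Sum>u\<in>V. (x u)\<^sup>2 / a u)"
proof -
  define N where "N u = {w\<in>V. A u w}" for u
  define g where "g u = (\<Sum>w\<in>V. if A u w then x u - x w else 0)" for u
  define q where "q u = (\<Sum>w\<in>V. if A u w then (x u - x w)\<^sup>2 else 0)" for u
  have g_N: "g u = (\<Sum>w\<in>N u. x u - x w)" and q_N: "q u = (\<Sum>w\<in>N u. (x u - x w)\<^sup>2)" for u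
    unfolding g_def q_def N_def using fin by (simp_all add: sum.inter_filter)
  have q_nonneg: "0 \<le> q u" for u
    unfolding q_def by (intro sum_nonneg) auto
  \<comment> \<open>Cauchy-Schwarz and the degree bound on the weights\<close>
  have local_bound: "a u * (g u)\<^sup>2 \<le> (1 - rho) * q u" if u: "u \<in> V" for u
  proof -
    have "(g u)\<^sup>2 \<le> real (card (N u)) * q u"
      using sum_squared_le_sum_of_squares[of "\<lambda>w. x u - x w" "N u"]
      unfolding g_N q_N by (simp add: mult.commute)
    then have "a u * (g u)\<^sup>2 \<le> (a u * real (card (N u))) * q u"
      using a_pos[OF u] by (simp add: mult_left_mono mult.assoc)
    also have "\<dots> \<le> (1 - rho) * q u"
      using a_deg[OF u] rho_le[OF u] q_nonneg unfolding N_def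
      by (intro mult_right_mono) (auto simp: algebra_simps)
    finally show ?thesis .
  qed
  have by_parts: "2 * (\<Sum>u\<in>V. x u * g u) = (\<Sum>u\<in>V. q u)"
    unfolding g_def q_def by (rule symmetric_sum_by_parts[OF sym])
  have expand: "(x u - a u * g u)\<^sup>2 / a u = (x u)\<^sup>2 / a u - 2 * (x u * g u) + a u * (g u)\<^sup>2"
    if "u \<in> V" for u
    using a_pos[OF that] by (simp add: field_simps power2_eq_square)
  have "(\<Sum>u\<in>V. (x u - a u * g u)\<^sup>2 / a u)
      = (\<Sum>u\<in>V. (x u)\<^sup>2 / a u) - 2 * (\<Sum>u\<in>V. x u * g u) + (\<Sum>u\<in>V. a u * (g u)\<^sup>2)"
    by (simp add: expand sum.distrib sum_subtractf sum_distrib_left)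
  also have "\<dots> \<le> (\<Sum>u\<in>V. (x u)\<^sup>2 / a u) - (\<Sum>u\<in>V. q u) + (\<Sum>u\<in>V. (1 - rho) * q u)"
    using by_parts sum_mono[of V "\<lambda>u. a u * (g u)\<^sup>2", OF local_bound] by linarith
  also have "\<dots> = (\<Sum>u\<in>V. (x u)\<^sup>2 / a u) - rho * (\<Sum>u\<in>V. q u)"
    by (simp add: sum_subtractf sum_distrib_left[symmetric] algebra_simps)
  finally show ?thesis unfolding g_def q_def by simp
qed

lemma relpow_shorten:
  assumes "finite A" and "r \<subseteq> A \<times> A" and "(i, j) \<in> r ^^ m" and "card A < m"
  obtains m' where "m' < m" and "(i, j) \<in> r ^^ m'"
proof -
  obtain f where f0: "f 0 = i" and fm: "f m = j" and f_step: "\<forall>k<m. (f k, f (Suc k)) \<in> r"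
    using assms(3) relpow_fun_conv by metis
  have "f ` {..<m} \<subseteq> A"
    using f_step assms(2) by blast
  then have "\<not> inj_on f {..<m}"
    using card_inj_on_le[of f "{..<m}" A] assms(1,4) by auto
  then obtain k l where kl: "k < l" "l < m" "f k = f l"
    unfolding inj_on_def by (metis lessThan_iff linorder_neqE_nat)
  have "(i, f k) \<in> r ^^ k"
    using f0 f_step kl by (auto simp: relpow_fun_conv)
  moreover have "(f l, j) \<in> r ^^ (m - l)"
    unfolding relpow_fun_conv
    by (rule exI[of _ "\<lambda>s. f (s + l)"]) (use fm f_step kl in auto)
  ultimately have "(i, j) \<in> r ^^ (k + (m - l))"
    using kl(3) relpow_add by fastforce
  moreover have "k + (m - l) < m"
    using kl by simp
  ultimately show ?thesis
    using that by blast
qed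

lemma rtrancl_imp_relpow_le_card:
  assumes "finite A" and "r \<subseteq> A \<times> A" and "(i, j) \<in> r\<^sup>*"
  obtains m where "m \<le> card A" and "(i, j) \<in> r ^^ m"
proof -
  obtain m where "(i, j) \<in> r ^^ m"
    using assms(3) rtrancl_power by blast
  then show ?thesis
  proof (induction m rule: less_induct)
    case (less m)
    show ?thesis
    proof (cases "m \<le> card A")
      case True
      with less.prems that show ?thesis by blast
    next
      case False
      with relpow_shorten[OF assms(1,2) less.prems] obtain m' where "m' < m" "(i, j) \<in> r ^^ m'"
        by auto
      then show ?thesis by (rule less.IH)
    qed
  qed
qed

lemma geometric_sums_shifted:
  fixes q :: real
  assumes "0 \<le> q" and "q < 1"
  shows "(\<lambda>t. q ^ (t - N)) sums (real N + 1 / (1 - q))"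
proof -
  have "(\<lambda>t. q ^ (t + N - N)) sums (1 / (1 - q))"
    using geometric_sums[of q] assms by simp
  then have "(\<lambda>t. q ^ (t - N)) sums (1 / (1 - q) + (\<Sum>t<N. q ^ (t - N)))"
    by (rule sums_iff_shift[THEN iffD1])
  then show ?thesis
    by (simp add: add.commute)
qed

lemma ln_energy_ratio_le:
  fixes n rho eps :: real
  assumes n: "1 \<le> n" and rho: "0 < rho" "rho < 1 / 2" and eps: "0 < eps" "eps < 1"
  shows "ln (8 * n / (rho * eps\<^sup>2)) + 2 \<le> 9 * ln (n / (rho * eps))"
proof -
  define Y where "Y = n / (rho * eps)"
  have "rho * eps \<le> rho"
    using rho eps by (simp add: mult_left_le)
  then have "2 * (rho * eps) \<le> n"
    using n rho by linarith
  then have Y: "2 \<le> Y"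
    unfolding Y_def using rho eps by (simp add: le_divide_eq)
  then have "ln 2 \<le> ln Y"
    by simp
  then have ln_Y: "1 / 2 \<le> ln Y"
    using ln2_ge_two_thirds by linarith
  have "8 * n / (rho * eps\<^sup>2) = 8 * (Y\<^sup>2 * (rho / n))"
    unfolding Y_def using n rho eps by (simp add: field_simps power2_eq_square)
  also have "\<dots> \<le> Y ^ 3 * Y\<^sup>2"
  proof (intro mult_mono)
    show "8 \<le> Y ^ 3"
      using power_mono[OF Y, of 3] by simp
    show "Y\<^sup>2 * (rho / n) \<le> Y\<^sup>2"
      using n rho mult_left_mono[of "rho / n" 1 "Y\<^sup>2"] by simp
  qed (use Y n rho in auto)
  finally have "ln (8 * n / (rho * eps\<^sup>2)) \<le> ln (Y ^ 5)"
    using n rho eps by (intro ln_mono) (simp_all flip: power_add)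
  also have "\<dots> = 5 * ln Y"
    using Y by (simp add: ln_realpow)
  finally show ?thesis
    using ln_Y unfolding Y_def by linarith
qed

lemma log_rate_bound:
  fixes n d p rho eps :: real
  assumes n: "1 \<le> n" and d: "1 \<le> d" and p: "0 < p" "p \<le> 1"
    and rho: "0 < rho" "rho < 1 / 2" and eps: "0 < eps" "eps < 1"
  shows "(ln (8 * n / (rho * eps\<^sup>2)) + 2) / (p * rho\<^sup>2 / (2 * n ^ 3))
    \<le> 18 * (d\<^sup>2 * n ^ 4 / (p ^ 3 * rho\<^sup>2)) * ln (n / (rho * eps))"
proof -
  let ?L = "ln (n / (rho * eps))"
  have "rho * eps \<le> 1"
    using rho eps by (intro mult_le_one) auto
  then have "0 \<le> ?L"
    using n rho eps by (intro ln_ge_zero) (simp add: le_divide_eq)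
  have "(ln (8 * n / (rho * eps\<^sup>2)) + 2) / (p * rho\<^sup>2 / (2 * n ^ 3)) \<le> 9 * ?L / (p * rho\<^sup>2 / (2 * n ^ 3))"
    using ln_energy_ratio_le[OF n rho eps] n p rho by (intro divide_right_mono) auto
  also have "\<dots> = 18 * (n ^ 3 / (p * rho\<^sup>2)) * ?L"
    using n p rho by (simp add: field_simps)
  also have "\<dots> \<le> 18 * (d\<^sup>2 * n ^ 4 / (p ^ 3 * rho\<^sup>2)) * ?L"
  proof -
    have "n ^ 3 * 1 \<le> n ^ 3 * (d\<^sup>2 * n)"
      using n d by (intro mult_left_mono) (auto simp: one_le_power intro: order_trans[OF _ mult_mono[of 1 _ 1]])
    also have "\<dots> = d\<^sup>2 * n ^ 4"
      by (simp add: eval_nat_numeral algebra_simps)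
    finally have "n ^ 3 \<le> d\<^sup>2 * n ^ 4"
      by simp
    moreover have "p ^ 3 \<le> p"
      using p by (simp add: power_le_one power3_eq_cube mult_le_one)
    ultimately have "n ^ 3 / (p * rho\<^sup>2) \<le> d\<^sup>2 * n ^ 4 / (p ^ 3 * rho\<^sup>2)"
      using p rho n by (intro frac_le) auto
    then show ?thesis
      using \<open>0 \<le> ?L\<close> by (intro mult_right_mono mult_left_mono) auto
  qed
  finally show ?thesis .
qed

abbreviation bernoulli_PiM :: "real \<Rightarrow> 'i set \<Rightarrow> ('i \<Rightarrow> bool) measure" where
  "bernoulli_PiM q J \<equiv> Pi\<^sub>M J (\<lambda>_. measure_pmf (bernoulli_pmf q))"

lemma product_prob_space_bernoulli: "product_prob_space (\<lambda>_ :: 'i. measure_pmf (bernoulli_pmf q))"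
  by unfold_locales

lemma prob_space_bernoulli_PiM: "prob_space (bernoulli_PiM q J)"
  by (rule prob_space_PiM) (simp add: prob_space_measure_pmf)

lemma sets_bernoulli_PiM_finite:
  assumes "finite J" and "A \<subseteq> space (bernoulli_PiM q J)"
  shows "A \<in> sets (bernoulli_PiM q J)"
proof -
  have "finite A"
    using assms by (simp add: space_PiM finite_subset[OF _ finite_PiE])
  have "(\<Pi>\<^sub>E j\<in>J. {x j}) = {x}" if "x \<in> A" for x
    using that assms(2) by (intro PiE_singleton) (auto simp: space_PiM PiE_iff)
  then have "A = (\<Union>x\<in>A. \<Pi>\<^sub>E j\<in>J. {x j})"
    by auto
  also have "\<dots> \<in> sets (bernoulli_PiM q J)"
    using \<open>finite A\<close> assms(1) by (intro sets.finite_UN sets_PiM_I_finite) auto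
  finally show ?thesis .
qed

lemma borel_measurable_bernoulli_PiM_finite:
  "finite J \<Longrightarrow> f \<in> borel_measurable (bernoulli_PiM q J)"
  by (rule measurableI) (auto intro: sets_bernoulli_PiM_finite)

lemma integrable_bernoulli_PiM_finite:
  fixes f :: "('i \<Rightarrow> bool) \<Rightarrow> real"
  assumes "finite J"
  shows "integrable (bernoulli_PiM q J) f"
proof -
  interpret prob_space "bernoulli_PiM q J"
    by (rule prob_space_bernoulli_PiM)
  have "finite (space (bernoulli_PiM q J))"
    using assms by (simp add: space_PiM finite_PiE)
  then show ?thesis
    by (intro integrable_const_bound[where B="Max (norm ` f ` space (bernoulli_PiM q J))"])
      (auto intro: borel_measurable_bernoulli_PiM_finite[OF assms])
qed

definition depends_only_on :: "'i set \<Rightarrow> (('i \<Rightarrow> 'b) \<Rightarrow> 'c) \<Rightarrow> bool" where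
  "depends_only_on J h \<longleftrightarrow> (\<forall>\<omega> \<omega>'. (\<forall>j\<in>J. \<omega> j = \<omega>' j) \<longrightarrow> h \<omega> = h \<omega>')"

lemma depends_only_on_restrict: "depends_only_on J h \<Longrightarrow> h (restrict \<omega> J) = h \<omega>"
  unfolding depends_only_on_def by auto

lemma borel_measurable_depends_only_on:
  assumes "finite J" and "J \<subseteq> I" and "depends_only_on J h"
  shows "h \<in> borel_measurable (bernoulli_PiM q I)"
proof -
  have "(\<lambda>\<omega>. h (restrict \<omega> J)) \<in> borel_measurable (bernoulli_PiM q I)"
    using measurable_restrict_subset[OF assms(2)] borel_measurable_bernoulli_PiM_finite[OF assms(1)]
    by (rule measurable_compose)
  then show ?thesis
    using depends_only_on_restrict[OF assms(3)] by simp
qed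

lemma nn_integral_depends_only_on:
  fixes h :: "_ \<Rightarrow> ennreal"
  assumes "finite J" and "J \<subseteq> I" and "depends_only_on J h"
  shows "(\<integral>\<^sup>+\<omega>. h \<omega> \<partial>bernoulli_PiM q I) = (\<integral>\<^sup>+\<omega>. h \<omega> \<partial>bernoulli_PiM q J)"
proof -
  have "(\<integral>\<^sup>+\<omega>. h \<omega> \<partial>bernoulli_PiM q J)
      = (\<integral>\<^sup>+\<omega>. h \<omega> \<partial>distr (bernoulli_PiM q I) (bernoulli_PiM q J) (\<lambda>\<omega>. restrict \<omega> J))"
    using product_prob_space.distr_PiM_restrict_finite[OF product_prob_space_bernoulli assms(1,2)] by simp
  also have "\<dots> = (\<integral>\<^sup>+\<omega>. h (restrict \<omega> J) \<partial>bernoulli_PiM q I)"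
    by (rule nn_integral_distr[OF measurable_restrict_subset[OF assms(2)]])
      (simp add: borel_measurable_bernoulli_PiM_finite[OF assms(1)])
  finally show ?thesis
    using depends_only_on_restrict[OF assms(3)] by simp
qed

lemma integral_bernoulli_PiM_coordinate:
  assumes "finite J" and "i \<in> J" and "0 \<le> q" and "q \<le> 1"
  shows "(\<integral>y. (if y i then c else 0) \<partial>bernoulli_PiM q J) = q * c"
proof -
  let ?S = "{y \<in> space (bernoulli_PiM q J). y i \<in> {True}}"
  have "emeasure (bernoulli_PiM q J) ?S = emeasure (measure_pmf (bernoulli_pmf q)) {True}"
    using assms(2) by (intro product_prob_space.emeasure_PiM_Collect_single[OF product_prob_space_bernoulli]) auto
  also have "\<dots> = ennreal q"
    using assms(3,4) by (simp add: emeasure_pmf_single)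
  finally have "measure (bernoulli_PiM q J) ?S = q"
    using assms(3) by (simp add: measure_def)
  moreover have "(\<integral>y. (if y i then c else 0) \<partial>bernoulli_PiM q J) = (\<integral>y. indicator ?S y * c \<partial>bernoulli_PiM q J)"
    by (intro Bochner_Integration.integral_cong) (auto simp: indicator_def)
  ultimately show ?thesis
    by (simp add: Int_absorb2)
qed

lemma mir_mir_False: "mir R (mir R (i, False)) = (i, False)"
  by (simp add: mir_def)

lemma sym_edges_mir:
  assumes "{u, v} \<in> sym_edges R F"
  shows "{mir R u, mir R v} \<in> sym_edges R F"
proof -
  obtain e where e: "e \<in> F" "{u, v} \<in> sym_edges_of R e"
    using assms unfolding sym_edges_def by blast
  let ?A = "(\<lambda>i. (i, False)) ` e"
  have mirror: "(\<lambda>i. mir R (i, False)) ` e = mir R ` ?A"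
    by auto
  have involution: "mir R ` mir R ` ?A = ?A"
    by (auto simp: image_image mir_mir_False)
  have "{u, v} = ?A \<or> {u, v} = mir R ` ?A"
    using e(2) unfolding sym_edges_of_def mirror by simp
  then have "{mir R u, mir R v} = mir R ` ?A \<or> {mir R u, mir R v} = ?A"
    using involution by (metis image_empty image_insert)
  then have "{mir R u, mir R v} \<in> sym_edges_of R e"
    unfolding sym_edges_of_def mirror by (simp only: insert_iff empty_iff) blast
  with e(1) show ?thesis
    unfolding sym_edges_def by blast
qed

lemma edge_in_sym_edges: "{k, l} \<in> F \<Longrightarrow> {(k, False), (l, False)} \<in> sym_edges R F"
  unfolding sym_edges_def sym_edges_of_def by (rule UN_I[of "{k, l}"]) simp_all

lemma sym_edges_mono: "F \<subseteq> G \<Longrightarrow> sym_edges R F \<subseteq> sym_edges R G"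
  unfolding sym_edges_def by auto

lemma kept_edges_subset: "kept_edges E \<omega> t \<subseteq> E"
  unfolding kept_edges_def by auto

locale motion_model =
  fixes n :: nat and R :: "nat set" and E :: "nat set set" and a :: "vtx \<Rightarrow> real"
    and p :: real and x0 :: "vtx \<Rightarrow> real"
  assumes n_ge_1: "n \<ge> 1" and R_subset: "R \<subseteq> {..<n}" and R_nonempty: "R \<noteq> {}"
    and simple: "simple_graph_on n E" and connected: "graph_connected n E"
    and a_bounds: "\<forall>u\<in>sym_vertices n R. 0 < a u \<and> a u < 1 / (real (sym_degree n R E u) + 1)"
    and a_mir: "\<forall>u\<in>sym_vertices n R. a (mir R u) = a u"
    and p_pos: "0 < p" and p_le_1: "p \<le> 1"
    and x0_bounds: "\<forall>i<n. 0 \<le> x0 (i, False) \<and> x0 (i, False) \<le> 1"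
    and x0_mir: "\<forall>u\<in>sym_vertices n R. x0 (mir R u) = - x0 u"
begin

abbreviation Vs :: "vtx set" where
  "Vs \<equiv> sym_vertices n R"

abbreviation traj :: "(nat \<times> nat set \<Rightarrow> bool) \<Rightarrow> nat \<Rightarrow> vtx \<Rightarrow> real" where
  "traj \<equiv> motion_traj n R E a x0"

lemma mem_Vs: "u \<in> Vs \<longleftrightarrow> fst u < n \<and> (snd u \<longrightarrow> fst u \<notin> R)"
  unfolding sym_vertices_def by (cases u) auto

lemma Vs_subset: "Vs \<subseteq> {..<n} \<times> UNIV"
  by (auto simp: mem_Vs)

lemma finite_Vs: "finite Vs"
  using Vs_subset by (rule finite_subset) auto

lemma card_Vs_le: "card Vs \<le> 2 * n"
  using card_mono[OF _ Vs_subset] by (simp add: card_cartesian_product)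

lemma Vs_nonempty: "Vs \<noteq> {}"
  using n_ge_1 mem_Vs[of "(0, False)"] by auto

lemma finite_E: "finite E"
proof (rule finite_subset)
  show "E \<subseteq> Pow {..<n}"
    using simple unfolding simple_graph_on_def by auto
qed simp

lemma mir_in_Vs: "u \<in> Vs \<Longrightarrow> mir R u \<in> Vs"
  by (cases u) (auto simp: mem_Vs mir_def)

lemma mir_mir: "u \<in> Vs \<Longrightarrow> mir R (mir R u) = u"
  by (cases u) (auto simp: mem_Vs mir_def)

lemma sum_mir: "(\<Sum>w\<in>Vs. f (mir R w)) = (\<Sum>w\<in>Vs. f w)"
  by (rule sum.reindex_bij_witness[where i="mir R" and j="mir R"]) (auto simp: mir_mir mir_in_Vs)

definition active :: "(nat \<times> nat set \<Rightarrow> bool) \<Rightarrow> nat \<Rightarrow> vtx \<Rightarrow> vtx \<Rightarrow> bool" where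
  "active \<omega> t u w \<longleftrightarrow> u \<noteq> w \<and> {u, w} \<in> sym_edges R (kept_edges E \<omega> t)"

lemma active_commute: "active \<omega> t u w = active \<omega> t w u"
  unfolding active_def by (auto simp: insert_commute)

lemma active_mir:
  assumes "u \<in> Vs" and "w \<in> Vs"
  shows "active \<omega> t (mir R u) (mir R w) = active \<omega> t u w"
proof -
  have "mir R u = mir R w \<longleftrightarrow> u = w"
    using assms by (metis mir_mir)
  moreover have "{mir R u, mir R w} \<in> sym_edges R F \<longleftrightarrow> {u, w} \<in> sym_edges R F" for F
    using sym_edges_mir[of u w R F] sym_edges_mir[of "mir R u" "mir R w" R F] assms by (auto simp: mir_mir)
  ultimately show ?thesis
    unfolding active_def by simp
qed

lemma traj_Suc:
  assumes u: "u \<in> Vs"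
  shows "traj \<omega> (Suc t) u
    = traj \<omega> t u - a u * (\<Sum>w\<in>Vs. if active \<omega> t u w then traj \<omega> t u - traj \<omega> t w else 0)"
proof -
  let ?x = "traj \<omega> t"
  define c where "c w = (if {u, w} \<in> sym_edges R (kept_edges E \<omega> t) then a u else 0)" for w
  have split: "(\<Sum>v\<in>Vs. f v) = f u + (\<Sum>v\<in>Vs - {u}. f v)" for f :: "vtx \<Rightarrow> real"
    using u finite_Vs by (simp add: sum.remove)
  have "traj \<omega> (Suc t) u = (\<Sum>v\<in>Vs. motion_matrix n R E a \<omega> t u v * ?x v)"
    by simp
  also have "\<dots> = (1 - (\<Sum>w\<in>Vs - {u}. c w)) * ?x u + (\<Sum>w\<in>Vs - {u}. c w * ?x w)"
    unfolding split[of "\<lambda>v. motion_matrix n R E a \<omega> t u v * ?x v"]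
    by (intro arg_cong2[where f="(+)"] sum.cong) (auto simp: motion_matrix_def c_def)
  also have "\<dots> = ?x u - (\<Sum>w\<in>Vs - {u}. c w * (?x u - ?x w))"
    by (simp add: algebra_simps sum_subtractf sum_distrib_right sum_distrib_left)
  also have "(\<Sum>w\<in>Vs - {u}. c w * (?x u - ?x w))
      = a u * (\<Sum>w\<in>Vs - {u}. if active \<omega> t u w then ?x u - ?x w else 0)"
    unfolding sum_distrib_left by (rule sum.cong) (auto simp: c_def active_def)
  also have "(\<Sum>w\<in>Vs - {u}. if active \<omega> t u w then ?x u - ?x w else 0)
      = (\<Sum>w\<in>Vs. if active \<omega> t u w then ?x u - ?x w else 0)"
    unfolding split[of "\<lambda>w. if active \<omega> t u w then ?x u - ?x w else 0"] by (simp add: active_def)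
  finally show ?thesis .
qed

definition energy :: "(vtx \<Rightarrow> real) \<Rightarrow> real" where
  "energy x = (\<Sum>u\<in>Vs. (x u)\<^sup>2 / a u)"

definition rho :: real where
  "rho = Min (a ` Vs)"

definition dirichlet :: "(vtx \<Rightarrow> real) \<Rightarrow> real" where
  "dirichlet x = (\<Sum>u\<in>Vs. \<Sum>w\<in>Vs. if u \<noteq> w \<and> {u, w} \<in> sym_edges R E then (x u - x w)\<^sup>2 else 0)"

definition active_dirichlet :: "(nat \<times> nat set \<Rightarrow> bool) \<Rightarrow> nat \<Rightarrow> (vtx \<Rightarrow> real) \<Rightarrow> real" where
  "active_dirichlet \<omega> t x = (\<Sum>u\<in>Vs. \<Sum>w\<in>Vs. if active \<omega> t u w then (x u - x w)\<^sup>2 else 0)"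

lemma a_pos: "u \<in> Vs \<Longrightarrow> 0 < a u"
  using a_bounds by auto

lemma a_degree_lt_1: "u \<in> Vs \<Longrightarrow> a u * (real (sym_degree n R E u) + 1) < 1"
  using a_bounds by (auto simp: field_simps)

lemma a_lt_1:
  assumes "u \<in> Vs"
  shows "a u < 1"
proof -
  have "a u * 1 \<le> a u * (real (sym_degree n R E u) + 1)"
    using a_pos[OF assms] by (intro mult_left_mono) auto
  with a_degree_lt_1[OF assms] show ?thesis
    by simp
qed

lemma rho_le: "u \<in> Vs \<Longrightarrow> rho \<le> a u"
  unfolding rho_def using finite_Vs by (intro Min_le) auto

lemma rho_pos: "0 < rho"
  unfolding rho_def using finite_Vs Vs_nonempty a_pos by (subst Min_gr_iff) auto

lemma rho_lt_1: "rho < 1"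
  using Vs_nonempty rho_le a_lt_1 by (meson ex_in_conv le_less_trans)

lemma a_active_degree_le_1:
  assumes u: "u \<in> Vs"
  shows "a u * (real (card {w\<in>Vs. active \<omega> t u w}) + 1) \<le> 1"
proof -
  have "sym_edges R (kept_edges E \<omega> t) \<subseteq> sym_edges R E"
    by (rule sym_edges_mono[OF kept_edges_subset])
  then have "{w\<in>Vs. active \<omega> t u w} \<subseteq> {v\<in>Vs. v \<noteq> u \<and> {u, v} \<in> sym_edges R E}"
    unfolding active_def by auto
  then have "card {w\<in>Vs. active \<omega> t u w} \<le> sym_degree n R E u"
    unfolding sym_degree_def using finite_Vs by (intro card_mono) auto
  then have "a u * (real (card {w\<in>Vs. active \<omega> t u w}) + 1) \<le> a u * (real (sym_degree n R E u) + 1)"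
    using a_pos[OF u] by (intro mult_left_mono) auto
  with a_degree_lt_1[OF u] show ?thesis
    by simp
qed

lemma energy_nonneg: "0 \<le> energy x"
  unfolding energy_def using a_pos by (intro sum_nonneg) (simp add: less_imp_le)

lemma dirichlet_nonneg: "0 \<le> dirichlet x"
  unfolding dirichlet_def by (intro sum_nonneg) simp

lemma active_dirichlet_nonneg: "0 \<le> active_dirichlet \<omega> t x"
  unfolding active_dirichlet_def by (intro sum_nonneg) simp

lemma energy_Suc_le:
  "energy (traj \<omega> (Suc t)) + rho * active_dirichlet \<omega> t (traj \<omega> t) \<le> energy (traj \<omega> t)"
proof -
  have "energy (traj \<omega> (Suc t)) = (\<Sum>u\<in>Vs.
      (traj \<omega> t u - a u * (\<Sum>w\<in>Vs. if active \<omega> t u w then traj \<omega> t u - traj \<omega> t w else 0))\<^sup>2 / a u)"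
    unfolding energy_def by (rule sum.cong[OF refl]) (simp only: traj_Suc)
  then show ?thesis
    unfolding energy_def active_dirichlet_def
    using laplacian_step_weighted_energy[OF finite_Vs active_commute a_pos a_active_degree_le_1 rho_le]
    by simp
qed

lemma decseq_energy: "decseq (\<lambda>t. energy (traj \<omega> t))"
  using energy_Suc_le rho_pos active_dirichlet_nonneg
  by (intro decseq_SucI) (smt (verit) mult_nonneg_nonneg)

definition antisymmetric :: "(vtx \<Rightarrow> real) \<Rightarrow> bool" where
  "antisymmetric x \<longleftrightarrow> (\<forall>u\<in>Vs. x (mir R u) = - x u)"

lemma antisymmetric_pinned:
  assumes "antisymmetric x" and "r \<in> R"
  shows "x (r, False) = 0"
proof -
  have "(r, False) \<in> Vs" and "mir R (r, False) = (r, False)"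
    using assms(2) R_subset by (auto simp: mem_Vs mir_def)
  then show ?thesis
    using assms(1) unfolding antisymmetric_def by force
qed

lemma antisymmetric_abs:
  assumes "antisymmetric x" and "(i, b) \<in> Vs"
  shows "\<bar>x (i, b)\<bar> = \<bar>x (i, False)\<bar>"
proof (cases b)
  case True
  then have "mir R (i, False) = (i, b)" and "(i, False) \<in> Vs"
    using assms(2) by (auto simp: mem_Vs mir_def)
  then show ?thesis
    using assms(1) unfolding antisymmetric_def by force
qed simp

lemma antisymmetric_traj: "antisymmetric (traj \<omega> t)"
  unfolding antisymmetric_def
proof (induction t)
  case 0
  then show ?case
    using x0_mir by simp
next
  case (Suc t)
  show ?case
  proof
    fix u assume u: "u \<in> Vs"
    let ?x = "traj \<omega> t"
    have "(\<Sum>w\<in>Vs. if active \<omega> t (mir R u) w then ?x (mir R u) - ?x w else 0)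
        = (\<Sum>w\<in>Vs. if active \<omega> t (mir R u) (mir R w) then ?x (mir R u) - ?x (mir R w) else 0)"
      by (rule sum_mir[symmetric])
    also have "\<dots> = - (\<Sum>w\<in>Vs. if active \<omega> t u w then ?x u - ?x w else 0)"
      unfolding sum_negf[symmetric] using u Suc.IH by (intro sum.cong refl) (simp add: active_mir)
    finally show "traj \<omega> (Suc t) (mir R u) = - traj \<omega> (Suc t) u"
      using traj_Suc[OF mir_in_Vs[OF u]] traj_Suc[OF u] Suc.IH u a_mir by simp
  qed
qed

definition graph_rel :: "(nat \<times> nat) set" where
  "graph_rel = {(k, l). {k, l} \<in> E}"

lemma graph_rel_edge:
  assumes "(k, l) \<in> graph_rel"
  shows "k < n" and "l < n" and "k \<noteq> l"
proof -
  have "{k, l} \<in> E"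
    using assms by (simp add: graph_rel_def)
  then obtain i j where "i < n" "j < n" "i \<noteq> j" "{k, l} = {i, j}"
    using simple unfolding simple_graph_on_def by blast
  then show "k < n" and "l < n" and "k \<noteq> l"
    by (auto simp: doubleton_eq_iff)
qed

lemma edge_sq_le_dirichlet:
  assumes "(k, l) \<in> graph_rel"
  shows "(x (k, False) - x (l, False))\<^sup>2 \<le> dirichlet x"
proof -
  let ?f = "\<lambda>u w. if u \<noteq> w \<and> {u, w} \<in> sym_edges R E then (x u - x w)\<^sup>2 else 0"
  have k: "(k, False) \<in> Vs" and l: "(l, False) \<in> Vs"
    using graph_rel_edge[OF assms] by (auto simp: mem_Vs)
  have "{(k, False), (l, False)} \<in> sym_edges R E"
    using assms edge_in_sym_edges unfolding graph_rel_def by blast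
  then have "(x (k, False) - x (l, False))\<^sup>2 = ?f (k, False) (l, False)"
    using graph_rel_edge[OF assms] by simp
  also have "\<dots> \<le> (\<Sum>w\<in>Vs. ?f (k, False) w)"
    by (rule member_le_sum[OF l _ finite_Vs]) simp
  also have "\<dots> \<le> (\<Sum>u\<in>Vs. \<Sum>w\<in>Vs. ?f u w)"
    by (rule member_le_sum[OF k _ finite_Vs]) (simp add: sum_nonneg)
  finally show ?thesis
    unfolding dirichlet_def .
qed

lemma relpow_abs_diff_le:
  assumes "(i, j) \<in> graph_rel ^^ m"
  shows "\<bar>x (i, False) - x (j, False)\<bar> \<le> real m * sqrt (dirichlet x)"
  using assms
proof (induction m arbitrary: j)
  case (Suc m)
  then obtain k where ik: "(i, k) \<in> graph_rel ^^ m" and kj: "(k, j) \<in> graph_rel"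
    by auto
  have "\<bar>x (k, False) - x (j, False)\<bar> \<le> sqrt (dirichlet x)"
    using edge_sq_le_dirichlet[OF kj] by (metis real_sqrt_abs real_sqrt_le_mono)
  with Suc.IH[OF ik] show ?case
    by (simp add: algebra_simps)
qed simp

lemma sq_le_dirichlet:
  assumes anti: "antisymmetric x" and u: "u \<in> Vs"
  shows "(x u)\<^sup>2 \<le> (real n)\<^sup>2 * dirichlet x"
proof -
  obtain i b where ib: "u = (i, b)"
    by (cases u)
  obtain r where r: "r \<in> R"
    using R_nonempty by blast
  have "(i, r) \<in> graph_rel\<^sup>*"
    using connected u r R_subset ib unfolding graph_connected_def graph_rel_def by (auto simp: mem_Vs)
  moreover have "graph_rel \<subseteq> {..<n} \<times> {..<n}"
    using graph_rel_edge by auto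
  ultimately obtain m where m: "m \<le> n" "(i, r) \<in> graph_rel ^^ m"
    using rtrancl_imp_relpow_le_card[of "{..<n}" graph_rel i r] by auto
  have "\<bar>x u\<bar> \<le> real m * sqrt (dirichlet x)"
    using relpow_abs_diff_le[OF m(2), of x] antisymmetric_abs[OF anti] antisymmetric_pinned[OF anti r] u ib
    by simp
  also have "\<dots> \<le> real n * sqrt (dirichlet x)"
    using m(1) dirichlet_nonneg[of x] by (intro mult_right_mono) auto
  finally have "\<bar>x u\<bar>\<^sup>2 \<le> (real n * sqrt (dirichlet x))\<^sup>2"
    by (intro power_mono) auto
  then show ?thesis
    using dirichlet_nonneg[of x] by (simp add: power_mult_distrib)
qed

lemma energy_le_dirichlet:
  assumes "antisymmetric x"
  shows "energy x \<le> 2 * real n ^ 3 / rho * dirichlet x"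
proof -
  have "energy x \<le> (\<Sum>u\<in>Vs. (real n)\<^sup>2 * dirichlet x / rho)"
    unfolding energy_def
  proof (rule sum_mono)
    fix u assume u: "u \<in> Vs"
    have "(x u)\<^sup>2 / a u \<le> (x u)\<^sup>2 / rho"
      using rho_le[OF u] rho_pos by (intro divide_left_mono) auto
    also have "\<dots> \<le> (real n)\<^sup>2 * dirichlet x / rho"
      using sq_le_dirichlet[OF assms u] rho_pos by (intro divide_right_mono) auto
    finally show "(x u)\<^sup>2 / a u \<le> (real n)\<^sup>2 * dirichlet x / rho" .
  qed
  also have "\<dots> = real (card Vs) * ((real n)\<^sup>2 * dirichlet x / rho)"
    by simp
  also have "\<dots> \<le> real (2 * n) * ((real n)\<^sup>2 * dirichlet x / rho)"
    using card_Vs_le dirichlet_nonneg[of x] rho_pos by (intro mult_right_mono) auto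
  finally show ?thesis
    by (simp add: power2_eq_square power3_eq_cube)
qed

definition gam :: real where
  "gam = p * rho\<^sup>2 / (2 * real n ^ 3)"

lemma gam_pos: "0 < gam"
  unfolding gam_def using p_pos rho_pos n_ge_1 by simp

lemma gam_le_1: "gam \<le> 1"
proof -
  have "p * rho\<^sup>2 \<le> 1 * 1"
    using p_pos p_le_1 rho_pos rho_lt_1 by (intro mult_mono) (auto simp: power_le_one)
  moreover have "1 \<le> real n ^ 3"
    using n_ge_1 by (simp add: one_le_power)
  ultimately show ?thesis
    unfolding gam_def by (auto simp: divide_le_eq_1)
qed

lemma energy_contraction:
  assumes "antisymmetric x"
  shows "energy x - rho * (p * dirichlet x) \<le> (1 - gam) * energy x"
proof -
  have "gam * energy x \<le> gam * (2 * real n ^ 3 / rho * dirichlet x)"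
    using energy_le_dirichlet[OF assms] gam_pos by (intro mult_left_mono) auto
  also have "\<dots> = rho * (p * dirichlet x)"
    unfolding gam_def using n_ge_1 rho_pos by (simp add: field_simps power2_eq_square)
  finally show ?thesis
    by (simp add: algebra_simps)
qed

definition history :: "nat \<Rightarrow> (nat \<times> nat set) set" where
  "history t = {..<t} \<times> E"

lemma finite_history: "finite (history t)"
  unfolding history_def using finite_E by simp

lemma history_subset: "history t \<subseteq> UNIV \<times> E"
  unfolding history_def by auto

lemma traj_cong:
  assumes "\<And>s e. s < t \<Longrightarrow> e \<in> E \<Longrightarrow> \<omega> (s, e) = \<omega>' (s, e)"
  shows "traj \<omega> t = traj \<omega>' t"
  using assms
proof (induction t)
  case (Suc t)
  have "kept_edges E \<omega> t = kept_edges E \<omega>' t"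
    using Suc.prems unfolding kept_edges_def by auto
  then have "motion_matrix n R E a \<omega> t = motion_matrix n R E a \<omega>' t"
    by (simp add: motion_matrix_def fun_eq_iff)
  with Suc show ?case
    by simp
qed simp

lemma depends_only_on_traj: "depends_only_on (history t) (\<lambda>\<omega>. f (traj \<omega> t))"
  unfolding depends_only_on_def history_def using traj_cong[of t] by (metis lessThan_iff mem_Sigma_iff)

lemma traj_merge_history: "traj (merge (history t) K (x, y)) t = traj x t"
  by (rule traj_cong) (simp add: merge_def history_def)

lemma kept_edges_merge_history:
  "kept_edges E (merge (history t) ({t} \<times> E) (x, y)) t = {e\<in>E. y (t, e)}"
  by (auto simp: kept_edges_def merge_def history_def)

definition origin_edge :: "vtx \<Rightarrow> vtx \<Rightarrow> nat set" where
  "origin_edge u w = (SOME e. e \<in> E \<and> {u, w} \<in> sym_edges_of R e)"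

lemma origin_edge:
  assumes "{u, w} \<in> sym_edges R E"
  shows "origin_edge u w \<in> E \<and> {u, w} \<in> sym_edges_of R (origin_edge u w)"
  unfolding origin_edge_def by (rule someI_ex) (use assms in \<open>auto simp: sym_edges_def\<close>)

lemma active_if_origin_edge_kept:
  assumes "u \<noteq> w" and "{u, w} \<in> sym_edges R E" and "origin_edge u w \<in> kept_edges E \<omega> t"
  shows "active \<omega> t u w"
proof -
  have "{u, w} \<in> sym_edges R (kept_edges E \<omega> t)"
    using assms(3) origin_edge[OF assms(2)] unfolding sym_edges_def by blast
  with assms(1) show ?thesis
    unfolding active_def by simp
qed

lemma expected_active_dirichlet_ge:
  "p * dirichlet X
    \<le> (\<integral>y. active_dirichlet (merge (history t) ({t} \<times> E) (x, y)) t X \<partial>bernoulli_PiM p ({t} \<times> E))"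
proof -
  let ?M = "bernoulli_PiM p ({t} \<times> E)"
  define edge where "edge u w \<longleftrightarrow> u \<noteq> w \<and> {u, w} \<in> sym_edges R E" for u w
  \<comment> \<open>Crediting each edge of G* to a single edge of G gives a sum of single-coin terms.\<close>
  define lower where "lower y =
    (\<Sum>u\<in>Vs. \<Sum>w\<in>Vs. if edge u w then (if y (t, origin_edge u w) then (X u - X w)\<^sup>2 else 0) else 0)" for y
  have "lower y \<le> active_dirichlet (merge (history t) ({t} \<times> E) (x, y)) t X" for y
    unfolding lower_def active_dirichlet_def edge_def
  proof (intro sum_mono)
    fix u w
    have "active (merge (history t) ({t} \<times> E) (x, y)) t u w"
      if "u \<noteq> w" "{u, w} \<in> sym_edges R E" "y (t, origin_edge u w)"
      using that origin_edge[OF that(2)]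
      by (intro active_if_origin_edge_kept) (simp_all add: kept_edges_merge_history)
    then show "(if u \<noteq> w \<and> {u, w} \<in> sym_edges R E then (if y (t, origin_edge u w) then (X u - X w)\<^sup>2 else 0) else 0)
        \<le> (if active (merge (history t) ({t} \<times> E) (x, y)) t u w then (X u - X w)\<^sup>2 else 0)"
      by auto
  qed
  then have "integral\<^sup>L ?M lower \<le> (\<integral>y. active_dirichlet (merge (history t) ({t} \<times> E) (x, y)) t X \<partial>?M)"
    using finite_E by (intro integral_mono integrable_bernoulli_PiM_finite) auto
  moreover have "integral\<^sup>L ?M lower = p * dirichlet X"
  proof -
    have coordinate: "(\<integral>y. (if edge u w then (if y (t, origin_edge u w) then c else 0) else 0) \<partial>?M)
        = (if edge u w then p * c else 0)" for u w c
      using integral_bernoulli_PiM_coordinate[of "{t} \<times> E" "(t, origin_edge u w)" p c]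
        finite_E p_pos p_le_1 origin_edge[of u w] by (auto simp: edge_def)
    have "integral\<^sup>L ?M lower = (\<Sum>u\<in>Vs. \<Sum>w\<in>Vs. if edge u w then p * (X u - X w)\<^sup>2 else 0)"
      unfolding lower_def coordinate[symmetric] using finite_E
      by (simp add: Bochner_Integration.integral_sum integrable_bernoulli_PiM_finite)
    also have "\<dots> = p * dirichlet X"
      unfolding dirichlet_def edge_def sum_distrib_left by (intro sum.cong refl) simp
    finally show ?thesis .
  qed
  ultimately show ?thesis
    by simp
qed

lemma expected_energy_step:
  "(\<integral>\<^sup>+y. energy (traj (merge (history t) ({t} \<times> E) (x, y)) (Suc t)) \<partial>bernoulli_PiM p ({t} \<times> E))
    \<le> ennreal ((1 - gam) * energy (traj x t))"
proof -
  let ?M = "bernoulli_PiM p ({t} \<times> E)"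
  let ?z = "\<lambda>y. merge (history t) ({t} \<times> E) (x, y)"
  let ?X = "traj x t"
  interpret prob_space ?M
    by (rule prob_space_bernoulli_PiM)
  have int: "integrable ?M f" for f :: "_ \<Rightarrow> real"
    using finite_E by (intro integrable_bernoulli_PiM_finite) simp
  have "energy (traj (?z y) (Suc t)) \<le> energy ?X - rho * active_dirichlet (?z y) t ?X" for y
    using energy_Suc_le[of "?z y" t] by (simp add: traj_merge_history)
  then have "(\<integral>y. energy (traj (?z y) (Suc t)) \<partial>?M) \<le> (\<integral>y. energy ?X - rho * active_dirichlet (?z y) t ?X \<partial>?M)"
    by (intro integral_mono int)
  also have "\<dots> = energy ?X - rho * (\<integral>y. active_dirichlet (?z y) t ?X \<partial>?M)"
    using int prob_space by simp
  also have "\<dots> \<le> energy ?X - rho * (p * dirichlet ?X)"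
    using expected_active_dirichlet_ge rho_pos by (simp add: mult_left_mono)
  also have "\<dots> \<le> (1 - gam) * energy ?X"
    using energy_contraction[OF antisymmetric_traj] .
  finally show ?thesis
    by (simp add: nn_integral_eq_integral[OF int] energy_nonneg ennreal_leI)
qed

definition expected_energy :: "nat \<Rightarrow> ennreal" where
  "expected_energy t = (\<integral>\<^sup>+\<omega>. energy (traj \<omega> t) \<partial>edge_sampling p E)"

lemma expected_energy_history:
  "expected_energy t = (\<integral>\<^sup>+\<omega>. energy (traj \<omega> t) \<partial>bernoulli_PiM p (history t))"
  unfolding expected_energy_def edge_sampling_def
  by (rule nn_integral_depends_only_on[OF finite_history history_subset depends_only_on_traj])

lemma expected_energy_Suc_le: "expected_energy (Suc t) \<le> ennreal (1 - gam) * expected_energy t"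
proof -
  let ?K = "{t} \<times> E"
  have split: "history (Suc t) = history t \<union> ?K" and disjoint: "history t \<inter> ?K = {}"
    by (auto simp: history_def)
  have "expected_energy (Suc t)
      = (\<integral>\<^sup>+x. (\<integral>\<^sup>+y. energy (traj (merge (history t) ?K (x, y)) (Suc t)) \<partial>bernoulli_PiM p ?K)
          \<partial>bernoulli_PiM p (history t))"
    unfolding expected_energy_history split
    by (rule product_sigma_finite.product_nn_integral_fold[OF
          product_prob_space.axioms(1)[OF product_prob_space_bernoulli] disjoint finite_history])
      (simp_all add: finite_E finite_history borel_measurable_bernoulli_PiM_finite)
  also have "\<dots> \<le> (\<integral>\<^sup>+x. ennreal (1 - gam) * energy (traj x t) \<partial>bernoulli_PiM p (history t))"
    using gam_le_1 energy_nonneg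
    by (intro nn_integral_mono order_trans[OF expected_energy_step]) (simp add: ennreal_mult)
  also have "\<dots> = ennreal (1 - gam) * expected_energy t"
    by (simp add: expected_energy_history nn_integral_cmult borel_measurable_bernoulli_PiM_finite
        finite_history)
  finally show ?thesis .
qed

lemma expected_energy_le: "expected_energy t \<le> ennreal ((1 - gam) ^ t * energy x0)"
proof (induction t)
  case 0
  interpret prob_space "edge_sampling p E"
    unfolding edge_sampling_def by (rule prob_space_bernoulli_PiM)
  show ?case
    by (simp add: expected_energy_def emeasure_space_1)
next
  case (Suc t)
  have "expected_energy (Suc t) \<le> ennreal (1 - gam) * ennreal ((1 - gam) ^ t * energy x0)"
    using expected_energy_Suc_le Suc.IH by (rule order_trans[OF _ mult_left_mono]) simp
  also have "\<dots> = ennreal ((1 - gam) ^ Suc t * energy x0)"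
    using gam_le_1 energy_nonneg by (simp add: ennreal_mult[symmetric] mult.assoc)
  finally show ?case .
qed

lemma energy_x0_le: "energy x0 \<le> 2 * real n / rho"
proof -
  have "energy x0 \<le> (\<Sum>u\<in>Vs. 1 / rho)"
    unfolding energy_def
  proof (rule sum_mono)
    fix u assume u: "u \<in> Vs"
    obtain i b where ib: "u = (i, b)"
      by (cases u)
    have "antisymmetric x0"
      using antisymmetric_traj[of _ 0] by simp
    then have "\<bar>x0 u\<bar> \<le> 1"
      using antisymmetric_abs[of x0 i b] x0_bounds u ib by (auto simp: mem_Vs)
    then have "(x0 u)\<^sup>2 \<le> 1"
      by (simp add: abs_square_le_1)
    then have "(x0 u)\<^sup>2 / a u \<le> 1 / a u"
      using a_pos[OF u] by (intro divide_right_mono) auto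
    also have "\<dots> \<le> 1 / rho"
      using rho_le[OF u] rho_pos by (intro divide_left_mono) auto
    finally show "(x0 u)\<^sup>2 / a u \<le> 1 / rho" .
  qed
  also have "\<dots> \<le> real (2 * n) / rho"
    using card_Vs_le rho_pos by (simp add: divide_right_mono)
  finally show ?thesis
    by simp
qed

lemma spread_gt_imp_energy_gt:
  assumes "0 < eps" and "eps < spread Vs x"
  shows "eps\<^sup>2 / 4 < energy x"
proof -
  have fin: "finite (x ` Vs)" "x ` Vs \<noteq> {}"
    using finite_Vs Vs_nonempty by auto
  obtain u1 where u1: "u1 \<in> Vs" "Max (x ` Vs) = x u1"
    using Max_in[OF fin] by auto
  obtain u2 where u2: "u2 \<in> Vs" "Min (x ` Vs) = x u2"
    using Min_in[OF fin] by auto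
  have "eps < x u1 - x u2"
    using assms(2) u1 u2 unfolding spread_def by simp
  then obtain u where u: "u \<in> Vs" "eps / 2 < \<bar>x u\<bar>"
  proof (cases "eps / 2 < \<bar>x u1\<bar>")
    case False
    with \<open>eps < x u1 - x u2\<close> have "eps / 2 < \<bar>x u2\<bar>"
      by linarith
    with that u2(1) show ?thesis
      by blast
  qed (use that u1(1) in blast)
  have "eps\<^sup>2 / 4 < (x u)\<^sup>2"
    using power_strict_mono[OF u(2), of 2] assms(1) by (simp add: power_divide)
  also have "\<dots> \<le> (x u)\<^sup>2 / a u"
    using a_pos[OF u(1)] a_lt_1[OF u(1)] by (simp add: le_divide_eq mult_left_le)
  also have "\<dots> \<le> energy x"
    unfolding energy_def by (rule member_le_sum[OF u(1) _ finite_Vs]) (simp add: a_pos less_imp_le)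
  finally show ?thesis .
qed

definition energy_exceeds :: "real \<Rightarrow> nat \<Rightarrow> (nat \<times> nat set \<Rightarrow> bool) \<Rightarrow> ennreal" where
  "energy_exceeds eps t \<omega> = (if eps\<^sup>2 / 4 < energy (traj \<omega> (Suc t)) then 1 else 0)"

\<comment> \<open>The energy never increases, so before the last time with large spread it stays above eps^2/4.\<close>
lemma last_time_le_suminf_energy_exceeds:
  assumes "0 < eps"
  shows "last_time n R E a x0 eps \<omega> \<le> (\<Sum>t. energy_exceeds eps t \<omega>)"
  unfolding last_time_def
proof (rule SUP_least)
  fix s assume "s \<in> {t. eps < spread Vs (traj \<omega> t)}"
  then have large: "eps\<^sup>2 / 4 < energy (traj \<omega> s)"
    using spread_gt_imp_energy_gt assms by auto
  have "energy_exceeds eps t \<omega> = 1" if "t < s" for t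
    using large decseqD[OF decseq_energy[of \<omega>], of "Suc t" s] that unfolding energy_exceeds_def by simp
  then have "(of_nat s :: ennreal) = (\<Sum>t<s. energy_exceeds eps t \<omega>)"
    by simp
  also have "\<dots> \<le> (\<Sum>t. energy_exceeds eps t \<omega>)"
    by (rule sum_le_suminf) (auto simp: summableI)
  finally show "of_nat s \<le> (\<Sum>t. energy_exceeds eps t \<omega>)" .
qed

lemma borel_measurable_energy_exceeds: "energy_exceeds eps t \<in> borel_measurable (edge_sampling p E)"
  unfolding edge_sampling_def energy_exceeds_def
  by (rule borel_measurable_depends_only_on[OF finite_history history_subset depends_only_on_traj])

lemma expected_energy_exceeds_le:
  assumes "0 < eps"
  shows "(\<integral>\<^sup>+\<omega>. energy_exceeds eps t \<omega> \<partial>edge_sampling p E) \<le> min 1 (ennreal (4 / eps\<^sup>2 * ((1 - gam) ^ Suc t * energy x0)))"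
proof (rule min.boundedI)
  interpret prob_space "edge_sampling p E"
    unfolding edge_sampling_def by (rule prob_space_bernoulli_PiM)
  have "(\<integral>\<^sup>+\<omega>. energy_exceeds eps t \<omega> \<partial>edge_sampling p E) \<le> (\<integral>\<^sup>+\<omega>. 1 \<partial>edge_sampling p E)"
    by (intro nn_integral_mono) (simp add: energy_exceeds_def)
  then show "(\<integral>\<^sup>+\<omega>. energy_exceeds eps t \<omega> \<partial>edge_sampling p E) \<le> 1"
    by (simp add: emeasure_space_1)
  have "energy_exceeds eps t \<omega> \<le> ennreal (4 / eps\<^sup>2) * energy (traj \<omega> (Suc t))" for \<omega>
    using assms energy_nonneg
    by (auto simp: energy_exceeds_def ennreal_mult[symmetric] field_simps simp flip: ennreal_1 intro!: ennreal_leI)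
  then have "(\<integral>\<^sup>+\<omega>. energy_exceeds eps t \<omega> \<partial>edge_sampling p E)
      \<le> (\<integral>\<^sup>+\<omega>. ennreal (4 / eps\<^sup>2) * energy (traj \<omega> (Suc t)) \<partial>edge_sampling p E)"
    by (rule nn_integral_mono)
  also have "\<dots> = ennreal (4 / eps\<^sup>2) * expected_energy (Suc t)"
    unfolding expected_energy_def edge_sampling_def
    by (rule nn_integral_cmult[OF borel_measurable_depends_only_on[OF finite_history history_subset
          depends_only_on_traj]])
  also have "\<dots> \<le> ennreal (4 / eps\<^sup>2) * ennreal ((1 - gam) ^ Suc t * energy x0)"
    by (intro mult_left_mono expected_energy_le) simp
  also have "\<dots> = ennreal (4 / eps\<^sup>2 * ((1 - gam) ^ Suc t * energy x0))"
    using gam_le_1 energy_nonneg by (intro ennreal_mult[symmetric]) auto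
  finally show "(\<integral>\<^sup>+\<omega>. energy_exceeds eps t \<omega> \<partial>edge_sampling p E) \<le> ennreal (4 / eps\<^sup>2 * ((1 - gam) ^ Suc t * energy x0))" .
qed

lemma expected_last_time_le:
  assumes "0 < eps" and N: "4 / eps\<^sup>2 * energy x0 * (1 - gam) ^ N \<le> 1"
  shows "(\<integral>\<^sup>+\<omega>. last_time n R E a x0 eps \<omega> \<partial>edge_sampling p E) \<le> ennreal (real N + 1 / gam)"
proof -
  let ?q = "1 - gam"
  have q: "0 \<le> ?q" "?q < 1"
    using gam_le_1 gam_pos by auto
  have term_le: "(\<integral>\<^sup>+\<omega>. energy_exceeds eps t \<omega> \<partial>edge_sampling p E) \<le> ennreal (?q ^ (t - N))" for t
  proof (cases "t < N")
    case True
    then show ?thesis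
      using expected_energy_exceeds_le[OF assms(1), of t] by (simp add: min.coboundedI1)
  next
    case False
    have "4 / eps\<^sup>2 * (?q ^ Suc t * energy x0) = (4 / eps\<^sup>2 * energy x0 * ?q ^ N) * ?q ^ (Suc t - N)"
      using False by (simp add: power_add[symmetric])
    also have "\<dots> \<le> ?q ^ (Suc t - N)"
      using mult_right_mono[OF N, of "?q ^ (Suc t - N)"] q by simp
    also have "\<dots> \<le> ?q ^ (t - N)"
      using q by (intro power_decreasing) auto
    finally show ?thesis
      using expected_energy_exceeds_le[OF assms(1), of t] by (meson ennreal_leI min.coboundedI2 order_trans)
  qed
  have "(\<integral>\<^sup>+\<omega>. last_time n R E a x0 eps \<omega> \<partial>edge_sampling p E)
      \<le> (\<integral>\<^sup>+\<omega>. (\<Sum>t. energy_exceeds eps t \<omega>) \<partial>edge_sampling p E)"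
    by (intro nn_integral_mono last_time_le_suminf_energy_exceeds assms(1))
  also have "\<dots> = (\<Sum>t. \<integral>\<^sup>+\<omega>. energy_exceeds eps t \<omega> \<partial>edge_sampling p E)"
    by (rule nn_integral_suminf) (rule borel_measurable_energy_exceeds)
  also have "\<dots> \<le> (\<Sum>t. ennreal (?q ^ (t - N)))"
    by (intro suminf_le term_le summableI)
  also have "\<dots> = ennreal (real N + 1 / gam)"
    using geometric_sums_shifted[OF q, of N] q(1)
    by (simp add: suminf_ennreal2 sums_summable sums_unique[symmetric])
  finally show ?thesis .
qed

lemma expected_last_time_le_log:
  assumes "0 < eps" and "eps < 1"
  shows "(\<integral>\<^sup>+\<omega>. last_time n R E a x0 eps \<omega> \<partial>edge_sampling p E)
    \<le> ennreal ((ln (8 * real n / (rho * eps\<^sup>2)) + 2) / gam)"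
proof -
  define K where "K = 8 * real n / (rho * eps\<^sup>2)"
  define N where "N = nat \<lceil>ln K / gam\<rceil>"
  have "1 \<le> K"
  proof -
    have "rho * eps\<^sup>2 \<le> 1"
      using rho_pos rho_lt_1 assms by (intro mult_le_one) (auto simp: power_le_one)
    then show ?thesis
      unfolding K_def using n_ge_1 rho_pos assms(1) by (simp add: le_divide_eq)
  qed
  then have ln_K: "0 \<le> ln K / gam"
    using gam_pos by simp
  have "(1 - gam) ^ N \<le> exp (- gam) ^ N"
    using gam_le_1 exp_ge_add_one_self[of "- gam"] by (intro power_mono) auto
  also have "\<dots> = exp (- (gam * real N))"
    by (simp add: exp_of_nat_mult[symmetric] mult.commute)
  also have "\<dots> \<le> exp (- ln K)"
  proof -
    have "ln K / gam \<le> real N"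
      unfolding N_def by (rule real_nat_ceiling_ge)
    then show ?thesis
      using gam_pos by (simp add: pos_divide_le_eq mult.commute)
  qed
  also have "\<dots> = 1 / K"
    using \<open>1 \<le> K\<close> by (simp add: exp_minus inverse_eq_divide)
  finally have "(1 - gam) ^ N \<le> 1 / K" .
  moreover have "4 / eps\<^sup>2 * energy x0 \<le> K"
    using mult_left_mono[OF energy_x0_le, of "4 / eps\<^sup>2"] unfolding K_def by (simp add: field_simps)
  ultimately have "4 / eps\<^sup>2 * energy x0 * (1 - gam) ^ N \<le> K * (1 / K)"
    using gam_le_1 energy_nonneg \<open>1 \<le> K\<close> by (intro mult_mono) auto
  then have "(\<integral>\<^sup>+\<omega>. last_time n R E a x0 eps \<omega> \<partial>edge_sampling p E) \<le> ennreal (real N + 1 / gam)"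
    using \<open>1 \<le> K\<close> by (intro expected_last_time_le assms(1)) simp
  also have "real N + 1 / gam \<le> (ln K + 2) / gam"
  proof -
    have "real N \<le> ln K / gam + 1"
      using ln_K unfolding N_def by linarith
    moreover have "1 \<le> 1 / gam"
      using gam_pos gam_le_1 by simp
    ultimately show ?thesis
      by (simp add: add_divide_distrib)
  qed
  finally show ?thesis
    unfolding K_def by (simp add: ennreal_leI)
qed

lemma exists_degree_ge_1:
  assumes "E \<noteq> {}"
  obtains u where "u \<in> Vs" and "1 \<le> sym_degree n R E u"
proof -
  obtain e where "e \<in> E"
    using assms by blast
  then obtain k l where "k < n" "l < n" "k \<noteq> l" "e = {k, l}"
    using simple unfolding simple_graph_on_def by blast
  with \<open>e \<in> E\<close> have kl: "{k, l} \<in> E" "k < n" "l < n" "k \<noteq> l"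
    by auto
  then have "(l, False) \<in> {v\<in>Vs. v \<noteq> (k, False) \<and> {(k, False), v} \<in> sym_edges R E}"
    using edge_in_sym_edges[OF kl(1)] by (simp add: mem_Vs)
  then have "1 \<le> sym_degree n R E (k, False)"
    unfolding sym_degree_def using finite_Vs by (auto simp: Suc_le_eq card_gt_0_iff)
  moreover have "(k, False) \<in> Vs"
    using kl(2) by (simp add: mem_Vs)
  ultimately show ?thesis
    using that by blast
qed

lemma rho_lt_half:
  assumes "E \<noteq> {}"
  shows "rho < 1 / 2"
proof -
  obtain u where u: "u \<in> Vs" "1 \<le> sym_degree n R E u"
    using exists_degree_ge_1[OF assms] .
  have "a u * 2 \<le> a u * (real (sym_degree n R E u) + 1)"
    using u a_pos[OF u(1)] by (intro mult_left_mono) auto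
  with a_degree_lt_1[OF u(1)] rho_le[OF u(1)] show ?thesis
    by simp
qed

lemma max_degree_ge_1:
  assumes "E \<noteq> {}"
  shows "1 \<le> Max (sym_degree n R E ` Vs)"
proof -
  obtain u where u: "u \<in> Vs" "1 \<le> sym_degree n R E u"
    using exists_degree_ge_1[OF assms] .
  have "sym_degree n R E u \<le> Max (sym_degree n R E ` Vs)"
    using finite_Vs u(1) by (intro Max_ge) auto
  with u(2) show ?thesis
    by simp
qed

\<comment> \<open>Without edges connectedness forces a single robot, which is pinned.\<close>
lemma last_time_no_edges:
  assumes "E = {}" and "0 < eps"
  shows "last_time n R E a x0 eps \<omega> = 0"
proof -
  have "n = 1"
  proof (rule ccontr)
    assume "n \<noteq> 1"
    with n_ge_1 connected have "(0, 1) \<in> {(k, l). {k, l} \<in> E}\<^sup>*"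
      unfolding graph_connected_def by simp
    with assms(1) show False
      by (simp add: rtrancl_empty)
  qed
  then have "Vs = {(0, False)}"
    using R_subset R_nonempty by (auto simp: sym_vertices_def)
  then have "{t. eps < spread Vs (traj \<omega> t)} = {}"
    using assms(2) by (simp add: spread_def)
  then show ?thesis
    unfolding last_time_def by (simp add: bot_ennreal)
qed

lemma expected_last_time_bound:
  assumes "0 < eps" and "eps < 1"
  shows "(\<integral>\<^sup>+\<omega>. last_time n R E a x0 eps \<omega> \<partial>edge_sampling p E)
    \<le> ennreal (18 * (real (Max (sym_degree n R E ` Vs)) ^ 2 * real n ^ 4 / (p ^ 3 * (Min (a ` Vs)) ^ 2))
        * ln (real n / (Min (a ` Vs) * eps)))"
proof (cases "E = {}")
  case True
  then show ?thesis
    using last_time_no_edges assms(1) by simp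
next
  case False
  have "(\<integral>\<^sup>+\<omega>. last_time n R E a x0 eps \<omega> \<partial>edge_sampling p E)
      \<le> ennreal ((ln (8 * real n / (rho * eps\<^sup>2)) + 2) / gam)"
    using expected_last_time_le_log[OF assms] .
  also have "\<dots> \<le> ennreal (18 * (real (Max (sym_degree n R E ` Vs)) ^ 2 * real n ^ 4 / (p ^ 3 * rho ^ 2))
        * ln (real n / (rho * eps)))"
    unfolding gam_def
    using log_rate_bound[of "real n" "real (Max (sym_degree n R E ` Vs))" p rho eps]
      n_ge_1 max_degree_ge_1[OF False] p_pos p_le_1 rho_pos rho_lt_half[OF False] assms
    by (intro ennreal_leI) simp
  finally show ?thesis
    unfolding rho_def .
qed

end

theorem theorem4:
  shows "\<exists>C>0. \<forall>(n::nat) (R::nat set) (E::nat set set) (a::vtx \<Rightarrow> real) (p::real) (eps::real) (x0::vtx \<Rightarrow> real).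
    n \<ge> 1 \<and> R \<subseteq> {..<n} \<and> R \<noteq> {} \<and> simple_graph_on n E \<and> graph_connected n E \<and>
    (\<forall>u\<in>sym_vertices n R. 0 < a u \<and> a u < 1 / (real (sym_degree n R E u) + 1)) \<and>
    (\<forall>u\<in>sym_vertices n R. a (mir R u) = a u) \<and>
    0 < p \<and> p \<le> 1 \<and> 0 < eps \<and> eps < 1 \<and>
    (\<forall>i<n. 0 \<le> x0 (i, False) \<and> x0 (i, False) \<le> 1) \<and>
    (\<forall>i\<in>R. x0 (i, False) = 0) \<and>
    (\<forall>u\<in>sym_vertices n R. x0 (mir R u) = - x0 u)
    \<longrightarrow>
    (\<integral>\<^sup>+\<omega>. last_time n R E a x0 eps \<omega> \<partial>edge_sampling p E)
      \<le> ennreal (C * (real (Max (sym_degree n R E ` sym_vertices n R)) ^ 2 * real n ^ 4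
                     / (p ^ 3 * (Min (a ` sym_vertices n R)) ^ 2))
                 * ln (real n / (Min (a ` sym_vertices n R) * eps)))"
proof (intro exI[of _ 18] conjI allI impI)
  fix n :: nat and R :: "nat set" and E :: "nat set set" and a :: "vtx \<Rightarrow> real"
    and p eps :: real and x0 :: "vtx \<Rightarrow> real"
  assume hyps: "n \<ge> 1 \<and> R \<subseteq> {..<n} \<and> R \<noteq> {} \<and> simple_graph_on n E \<and> graph_connected n E \<and>
    (\<forall>u\<in>sym_vertices n R. 0 < a u \<and> a u < 1 / (real (sym_degree n R E u) + 1)) \<and>
    (\<forall>u\<in>sym_vertices n R. a (mir R u) = a u) \<and>
    0 < p \<and> p \<le> 1 \<and> 0 < eps \<and> eps < 1 \<and>
    (\<forall>i<n. 0 \<le> x0 (i, False) \<and> x0 (i, False) \<le> 1) \<and>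
    (\<forall>i\<in>R. x0 (i, False) = 0) \<and>
    (\<forall>u\<in>sym_vertices n R. x0 (mir R u) = - x0 u)"
  then interpret motion_model n R E a p x0
    by unfold_locales auto
  show "(\<integral>\<^sup>+\<omega>. last_time n R E a x0 eps \<omega> \<partial>edge_sampling p E)
      \<le> ennreal (18 * (real (Max (sym_degree n R E ` sym_vertices n R)) ^ 2 * real n ^ 4
                     / (p ^ 3 * (Min (a ` sym_vertices n R)) ^ 2))
                 * ln (real n / (Min (a ` sym_vertices n R) * eps)))"
    using hyps by (intro expected_last_time_bound) auto
qed simp

end
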